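(* Let $p_1,p_2>2$ be distinct primes, let $m_1=p_1^{\alpha_1}p_2^{\alpha_2}$ and $m_2=p_1^{\beta_1}p_2^{\beta_2}$ with $\alpha_1,\alpha_2,\beta_1,\beta_2$ positive integers. If $m_1$ is good and $m_1\mid m_2$, then $m_2$ is good.
   Context: For $m=p_1^{\alpha_1}p_2^{\alpha_2}$ with $p_1,p_2>2$ distinct primes and $\alpha_1,\alpha_2\ge1$: let $t=\mathrm{ord}_m(2)$ (the multiplicative order of $2$ modulo $m$) and let $\gamma\in\mathbb{F}_{2^t}^*$ be a primitive $m$th root of unity. The canonical set of $m$ is $S_m=\{s_{01},s_{10},s_{11}\}\subseteq\mathbb{Z}_m$, where for $\sigma=(\sigma_1,\sigma_2)\in\{0,1\}^2\setminus\{(0,0)\}$, $s_\sigma$ is the unique element of $\mathbb{Z}_m$ with $s_\sigma\equiv\sigma_1 \pmod{p_1^{\alpha_1}}$ and $s_\sigma\equiv \sigma_2\pmod{p_2^{\alpha_2}}$. An $S_m$-decoding polynomial is a polynomial $P(X)\in\mathbb{F}_{2^t}[X]$ such that $P(\gamma^s)=0$ for every $s\in S_m$ and $P(1)=1$. The number $m$ is called good if there exists an $S_m$-decoding polynomial with fewer than $4$ monomials (nonzero terms). *)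

theory Defs
  imports "HOL-Number_Theory.Number_Theory" "HOL-Computational_Algebra.Polynomial" "HOL-Library.Cardinality"
begin

definition s_sigma :: "nat \<Rightarrow> nat \<Rightarrow> nat \<Rightarrow> nat \<Rightarrow> nat" where
  "s_sigma q1 q2 \<sigma>1 \<sigma>2 = (THE s. s < q1 * q2 \<and> s mod q1 = \<sigma>1 \<and> s mod q2 = \<sigma>2)"

definition canonical_set :: "nat \<Rightarrow> nat \<Rightarrow> nat \<Rightarrow> nat \<Rightarrow> nat set" where
  "canonical_set p1 a1 p2 a2 =
     {s_sigma (p1^a1) (p2^a2) 0 1, s_sigma (p1^a1) (p2^a2) 1 0, s_sigma (p1^a1) (p2^a2) 1 1}"

definition primitive_root_of_unity :: "nat \<Rightarrow> 'a::field \<Rightarrow> bool" where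
  "primitive_root_of_unity m \<gamma> \<longleftrightarrow> \<gamma> ^ m = 1 \<and> (\<forall>k. 0 < k \<and> k < m \<longrightarrow> \<gamma> ^ k \<noteq> 1)"

definition num_monomials :: "'a::zero poly \<Rightarrow> nat" where
  "num_monomials P = card {i. coeff P i \<noteq> 0}"

definition decoding_poly :: "'a::field \<Rightarrow> nat set \<Rightarrow> 'a poly \<Rightarrow> bool" where
  "decoding_poly \<gamma> S P \<longleftrightarrow> (\<forall>s\<in>S. poly P (\<gamma> ^ s) = 0) \<and> poly P 1 = 1"

definition good_wrt :: "'a::field \<Rightarrow> nat \<Rightarrow> nat \<Rightarrow> nat \<Rightarrow> nat \<Rightarrow> bool" where
  "good_wrt \<gamma> p1 a1 p2 a2 \<longleftrightarrow>
     (\<exists>P. decoding_poly \<gamma> (canonical_set p1 a1 p2 a2) P \<and> num_monomials P < 4)"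

end

theory Submission
  imports Defs "HOL-Library.Z2" "Subresultants.More_Homomorphisms"
begin

text \<open>
  Since \<open>s\<^sub>\<sigma>\<close> is determined by its
  residues modulo the two prime powers, reduction modulo \<open>m\<^sub>1\<close> maps \<open>S\<^sub>m\<^sub>2\<close> into \<open>S\<^sub>m\<^sub>1\<close>.
  The field \<open>\<gamma>\<^sub>1\<close> lives in has \<open>2^ord\<^sub>m\<^sub>1(2)\<close> elements, the least possible for a field of
  characteristic 2 with a primitive \<open>m\<^sub>1\<close>-th root of unity, so it is generated by \<open>\<gamma>\<^sub>1\<close> over
  \<open>\<bbbF>\<^sub>2\<close>. Hence it embeds into the field of \<open>\<gamma>\<^sub>2\<close> by a ring homomorphism \<open>\<phi>\<close> sending \<open>\<gamma>\<^sub>1\<close> to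
  a root of its minimal polynomial. That polynomial divides \<open>X^m\<^sub>1 - 1\<close>, whose roots there are
  the powers of \<open>\<gamma>\<^sub>2^(m\<^sub>2/m\<^sub>1)\<close>, so \<open>\<phi> \<gamma>\<^sub>1 = \<gamma>\<^sub>2^N\<close>. If \<open>P\<close> decodes \<open>S\<^sub>m\<^sub>1\<close>, then
  \<open>Q(X) = P\<^sup>\<phi>(X^N)\<close> has no more monomials than \<open>P\<close>, \<open>Q(1) = 1\<close>, and
  \<open>Q(\<gamma>\<^sub>2^s) = \<phi>(P(\<gamma>\<^sub>1^(s mod m\<^sub>1))) = 0\<close> for \<open>s \<in> S\<^sub>m\<^sub>2\<close>.
\<close>

lemma UNIV_bit: "(UNIV :: bit set) = {0, 1}"
  using bit_not_zero_iff by blast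

instance bit :: finite
  by standard (simp add: UNIV_bit)

lemma CARD_bit [simp]: "CARD(bit) = 2"
  by (simp add: UNIV_bit)

lemma two_eq_zero_if_CARD_eq_power_2:
  assumes "CARD('a::{finite,field}) = 2 ^ t"
  shows "(2::'a) = 0"
proof -
  have "(of_nat CARD('a) :: 'a) = 0"
    by (simp add: of_nat_eq_0_iff_char_dvd CHAR_dvd_CARD)
  then show ?thesis using assms by simp
qed

lemma comm_ring_hom_of_bit:
  assumes "(2::'a::comm_ring_1) = 0"
  shows "comm_ring_hom (of_bit :: bit \<Rightarrow> 'a)"
proof
  fix x y :: bit
  have "(1::'a) + 1 = 0" using assms by (simp add: one_add_one)
  then show "of_bit (x + y) = (of_bit x + of_bit y :: 'a)" by (cases x; cases y) simp_all
  show "of_bit (x * y) = (of_bit x * of_bit y :: 'a)" by (cases x; cases y) simp_all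
qed simp_all

lemma comm_ring_hom_poly_map_poly:
  assumes "comm_ring_hom \<phi>"
  shows "comm_ring_hom (\<lambda>h. poly (map_poly \<phi> h) x)"
proof -
  interpret map_poly_comm_ring_hom \<phi> using assms by (simp add: map_poly_comm_ring_hom_def)
  show ?thesis by unfold_locales (simp_all add: hom_distribs)
qed

lemma card_poly_degree_less:
  assumes "d > 0"
  shows "card {p :: 'a::{finite,zero} poly. degree p < d} = CARD('a) ^ d"
proof -
  have "bij_betw (\<lambda>p. map (coeff p) [0..<d]) {p. degree p < d} {xs. length xs = d}"
  proof (rule bij_betw_byWitness[where f' = Poly])
    show "\<forall>p\<in>{p. degree p < d}. Poly (map (coeff p) [0..<d]) = p"
      by (auto intro!: poly_eqI simp: nth_default_def coeff_eq_0)
    show "\<forall>xs\<in>{xs. length xs = d}. map (coeff (Poly xs)) [0..<d] = xs"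
      by (auto intro!: nth_equalityI simp: nth_default_def)
    show "Poly ` {xs. length xs = d} \<subseteq> {p. degree p < d}"
      using assms by (auto intro!: degree_lessI simp: nth_default_def)
  qed auto
  then have "card {p :: 'a poly. degree p < d} = card {xs :: 'a list. length xs = d}"
    by (rule bij_betw_same_card)
  also have "\<dots> = CARD('a) ^ d"
    using card_lists_length_eq[of "UNIV :: 'a set" d] by simp
  finally show ?thesis .
qed

lemma comm_ring_hom_mod_eq:
  assumes "comm_ring_hom ev" "ev f = 0"
  shows "ev (h mod f) = ev (h :: 'k::field poly)"
proof -
  interpret comm_ring_hom ev by fact
  have "ev h = ev (f * (h div f) + h mod f)" by simp
  also have "\<dots> = ev f * ev (h div f) + ev (h mod f)" by (simp only: hom_add hom_mult)
  finally show ?thesis using assms(2) by simp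
qed

lemma comm_ring_hom_poly_kernel_principal:
  fixes ev :: "'k::field poly \<Rightarrow> 'a::comm_ring_1"
  assumes hom: "comm_ring_hom ev" and "h0 \<noteq> 0" "ev h0 = 0"
  obtains f where "f \<noteq> 0" "\<And>h. ev h = 0 \<longleftrightarrow> f dvd h"
proof -
  interpret comm_ring_hom ev by (rule hom)
  define K where "K = {h. h \<noteq> 0 \<and> ev h = 0}"
  have "h0 \<in> K" using assms by (simp add: K_def)
  then obtain f where "f \<in> K" and least: "\<And>h. h \<in> K \<Longrightarrow> degree f \<le> degree h"
    using ex_has_least_nat[of "\<lambda>h. h \<in> K" h0 degree] by blast
  then have f: "f \<noteq> 0" "ev f = 0" by (simp_all add: K_def)
  have "ev h = 0 \<longleftrightarrow> f dvd h" for h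
  proof
    assume "ev h = 0"
    then have "ev (h mod f) = 0" using comm_ring_hom_mod_eq[OF hom f(2)] by simp
    have "h mod f = 0"
    proof (rule ccontr)
      assume "h mod f \<noteq> 0"
      then have "degree f \<le> degree (h mod f)"
        using \<open>ev (h mod f) = 0\<close> by (intro least) (simp add: K_def)
      moreover have "degree (h mod f) < degree f" by (rule degree_mod_less'[OF f(1) \<open>h mod f \<noteq> 0\<close>])
      ultimately show False by simp
    qed
    then show "f dvd h" by (simp add: mod_eq_0_iff_dvd)
  next
    assume "f dvd h"
    then obtain g where "h = f * g" by (elim dvdE)
    then show "ev h = 0" using f(2) by (simp add: hom_mult)
  qed
  with f(1) show ?thesis by (rule that)
qed

lemma card_range_comm_ring_hom_poly:
  fixes ev :: "'k::{field,finite} poly \<Rightarrow> 'a::comm_ring_1"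
  assumes hom: "comm_ring_hom ev" and ker: "\<And>h. ev h = 0 \<longleftrightarrow> f dvd h" and "degree f > 0"
  shows "card (range ev) = CARD('k) ^ degree f"
proof -
  interpret comm_ring_hom ev by (rule hom)
  have "f \<noteq> 0" using \<open>degree f > 0\<close> by auto
  have "bij_betw ev {h. degree h < degree f} (range ev)"
  proof (rule bij_betw_imageI)
    show "inj_on ev {h. degree h < degree f}"
    proof (rule inj_onI)
      fix x y assume x: "x \<in> {h. degree h < degree f}" and y: "y \<in> {h. degree h < degree f}"
        and "ev x = ev y"
      then have "ev (x - y) = 0" by (simp add: hom_minus)
      then have "f dvd x - y" using ker by blast
      have "x - y = 0"
      proof (rule ccontr)
        assume "x - y \<noteq> 0"
        then have "degree f \<le> degree (x - y)" by (rule dvd_imp_degree_le[OF \<open>f dvd x - y\<close>])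
        moreover have "degree (x - y) < degree f" using x y by (simp add: degree_diff_less)
        ultimately show False by simp
      qed
      then show "x = y" by simp
    qed
    have "ev h \<in> ev ` {h. degree h < degree f}" for h
    proof (rule rev_image_eqI)
      show "h mod f \<in> {h. degree h < degree f}"
      proof (cases "h mod f = 0")
        case False
        with \<open>f \<noteq> 0\<close> show ?thesis by (simp add: degree_mod_less')
      qed (use \<open>degree f > 0\<close> in simp)
      have "ev f = 0" using ker[of f] by simp
      then show "ev h = ev (h mod f)" by (simp add: comm_ring_hom_mod_eq[OF hom])
    qed
    then show "ev ` {h. degree h < degree f} = range ev" by blast
  qed
  then have "card (range ev) = card {h :: 'k poly. degree h < degree f}"
    by (simp add: bij_betw_same_card)
  also have "\<dots> = CARD('k) ^ degree f" using \<open>degree f > 0\<close> by (rule card_poly_degree_less)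
  finally show ?thesis .
qed

lemma power_card_eq_1_if_mult_closed:
  fixes F :: "'a::field set"
  assumes "finite F" "x \<in> F" "x \<noteq> 0" and mult: "\<And>y z. y \<in> F \<Longrightarrow> z \<in> F \<Longrightarrow> y * z \<in> F"
  shows "x ^ card (F - {0}) = 1"
proof -
  let ?F = "F - {0}"
  have inj: "inj_on (\<lambda>y. x * y) ?F" using \<open>x \<noteq> 0\<close> by (intro inj_onI) simp
  have "x * y \<in> ?F" if "y \<in> ?F" for y using that mult[OF \<open>x \<in> F\<close>, of y] \<open>x \<noteq> 0\<close> by simp
  then have "(\<lambda>y. x * y) ` ?F \<subseteq> ?F" by (rule image_subsetI)
  moreover have "finite ?F" using \<open>finite F\<close> by simp
  ultimately have perm: "(\<lambda>y. x * y) ` ?F = ?F" using inj by (intro endo_inj_surj)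
  have "1 * prod id ?F = prod id ((\<lambda>y. x * y) ` ?F)" by (simp only: perm mult_1)
  also have "\<dots> = (\<Prod>y\<in>?F. x * y)" by (simp only: prod.reindex[OF inj] comp_def id_apply)
  also have "\<dots> = x ^ card ?F * prod id ?F" by (simp only: prod.distrib prod_constant id_def)
  finally have "1 * prod id ?F = x ^ card ?F * prod id ?F" .
  moreover have "prod id ?F \<noteq> 0" using \<open>finite F\<close> by (subst prod_zero_iff) auto
  ultimately show ?thesis by (metis mult_right_cancel)
qed

lemma primitive_root_of_unity_dvd:
  assumes "primitive_root_of_unity m x" "x ^ n = 1" "m > 0"
  shows "m dvd n"
proof -
  have "x ^ n = (x ^ m) ^ (n div m) * x ^ (n mod m)"
    by (simp flip: power_mult power_add)
  then have "x ^ (n mod m) = 1" using assms by (simp add: primitive_root_of_unity_def)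
  moreover have "n mod m < m" using \<open>m > 0\<close> by simp
  ultimately have "n mod m = 0" using assms(1) by (auto simp: primitive_root_of_unity_def)
  then show ?thesis by (simp add: mod_eq_0_iff_dvd)
qed

lemma primitive_root_of_unity_power_div:
  assumes "primitive_root_of_unity n x" "m dvd n" "0 < n"
  shows "primitive_root_of_unity m (x ^ (n div m))"
proof -
  obtain k where n: "n = m * k" using \<open>m dvd n\<close> by (elim dvdE)
  with \<open>0 < n\<close> have "0 < m" "0 < k" by simp_all
  then show ?thesis
    using assms(1) unfolding n primitive_root_of_unity_def
    by (simp add: mult.commute[of k] power_mult[symmetric])
qed

lemma inj_on_power_primitive_root_of_unity:
  assumes "primitive_root_of_unity m x"
  shows "inj_on (\<lambda>i. x ^ i) {..<m}"
proof -
  have neq: "x ^ i \<noteq> x ^ j" if "i < j" "j < m" for i j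
  proof
    assume "x ^ i = x ^ j"
    moreover have "x ^ i * x ^ (j - i) = x ^ j" using \<open>i < j\<close> by (simp flip: power_add)
    ultimately have "x ^ i * x ^ (j - i) = x ^ i * 1" by simp
    moreover have "x \<noteq> 0" using assms that by (auto simp: primitive_root_of_unity_def power_0_left)
    ultimately have "x ^ (j - i) = 1" by simp
    then show False using assms that by (simp add: primitive_root_of_unity_def)
  qed
  show ?thesis
  proof (rule inj_onI)
    fix i j assume "i \<in> {..<m}" "j \<in> {..<m}" "x ^ i = x ^ j"
    then show "i = j" using neq[of i j] neq[of j i] by (cases i j rule: linorder_cases) auto
  qed
qed

lemma primitive_root_of_unity_power_root_of_dvd:
  fixes g :: "'a::field poly"
  assumes x: "primitive_root_of_unity m x" and "m > 0"
    and dvd: "g dvd monom 1 m - 1" and "degree g > 0"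
  obtains i where "poly g (x ^ i) = 0"
proof -
  obtain h where gh: "monom 1 m - 1 = g * h" using dvd by (elim dvdE)
  have deg: "degree (monom (1::'a) m - 1) = m"
    using degree_add_eq_left[of "- 1" "monom (1::'a) m"] \<open>m > 0\<close> by (simp add: degree_monom_eq)
  then have "h \<noteq> 0" "g \<noteq> 0" using gh \<open>m > 0\<close> by auto
  then have "degree h < m" using deg gh \<open>degree g > 0\<close> by (simp add: degree_mult_eq)
  show ?thesis
  proof (rule ccontr)
    assume no_root: "\<not> ?thesis"
    have "poly h (x ^ i) = 0" for i
    proof -
      have "(x ^ i) ^ m = (x ^ m) ^ i" by (simp only: mult.commute flip: power_mult)
      then have "(x ^ i) ^ m = 1" using x by (simp add: primitive_root_of_unity_def)
      then have "poly (g * h) (x ^ i) = 0" by (simp flip: gh add: poly_monom)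
      then show ?thesis using no_root that by auto
    qed
    then have "(\<lambda>i. x ^ i) ` {..<m} \<subseteq> {y. poly h y = 0}" by auto
    then have "card ((\<lambda>i. x ^ i) ` {..<m}) \<le> card {y. poly h y = 0}"
      using poly_roots_finite[OF \<open>h \<noteq> 0\<close>] by (rule card_mono[rotated])
    also have "\<dots> \<le> degree h" using \<open>h \<noteq> 0\<close> by (rule card_poly_roots_bound)
    finally show False
      using \<open>degree h < m\<close> card_image[OF inj_on_power_primitive_root_of_unity[OF x]] by simp
  qed
qed

lemma comm_ring_hom_factor_surj:
  fixes ea :: "'r::comm_ring_1 \<Rightarrow> 'a::comm_ring_1" and eb :: "'r \<Rightarrow> 'b::comm_ring_1"
  assumes "comm_ring_hom ea" "comm_ring_hom eb" "surj ea" and ker: "\<And>x. ea x = 0 \<Longrightarrow> eb x = 0"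
  obtains \<phi> where "comm_ring_hom \<phi>" "\<And>x. \<phi> (ea x) = eb x"
proof -
  interpret a: comm_ring_hom ea by fact
  interpret b: comm_ring_hom eb by fact
  define \<phi> where "\<phi> y = eb (SOME x. ea x = y)" for y
  have \<phi>: "\<phi> (ea x) = eb x" for x
  proof -
    have "ea (SOME x'. ea x' = ea x) = ea x" by (rule someI) (rule refl)
    then have "ea ((SOME x'. ea x' = ea x) - x) = 0" by (simp add: a.hom_minus)
    then have "eb ((SOME x'. ea x' = ea x) - x) = 0" by (rule ker)
    then show ?thesis unfolding \<phi>_def by (simp add: b.hom_minus)
  qed
  have "comm_ring_hom \<phi>"
  proof
    fix y z
    obtain x x' where "y = ea x" "z = ea x'" using \<open>surj ea\<close> by (metis surjD)
    then show "\<phi> (y + z) = \<phi> y + \<phi> z" "\<phi> (y * z) = \<phi> y * \<phi> z"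
      by (simp_all flip: a.hom_add a.hom_mult add: \<phi> b.hom_add b.hom_mult)
  next
    show "\<phi> 1 = 1" "\<phi> 0 = 0" using \<phi>[of 1] \<phi>[of 0] by simp_all
  qed
  then show ?thesis using \<phi> by (rule that)
qed

text \<open>The image is a subfield with \<open>2^(degree f)\<close> elements containing \<open>x\<close>, so
  \<open>m dvd 2^(degree f) - 1\<close>, i.e. \<open>ord m 2 dvd degree f\<close>.\<close>

lemma surj_poly_of_bit_primitive_root:
  fixes x :: "'a::{field,finite}"
  assumes card: "CARD('a) = 2 ^ ord m 2" and x: "primitive_root_of_unity m x" and "m > 0"
    and ker: "\<And>h. poly (map_poly of_bit h) x = 0 \<longleftrightarrow> f dvd h" and "degree f > 0"
  shows "surj (\<lambda>h. poly (map_poly of_bit h) x)"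
proof -
  let ?ev = "\<lambda>h. poly (map_poly of_bit h) x"
  have hom: "comm_ring_hom ?ev"
    by (rule comm_ring_hom_poly_map_poly comm_ring_hom_of_bit two_eq_zero_if_CARD_eq_power_2)+
      (fact card)
  interpret comm_ring_hom ?ev by (fact hom)
  have card_range: "card (range ?ev) = 2 ^ degree f"
    using card_range_comm_ring_hom_poly[OF hom ker \<open>degree f > 0\<close>] by simp
  have "x ^ card (range ?ev - {0}) = 1"
  proof (rule power_card_eq_1_if_mult_closed)
    show "x \<in> range ?ev" using rangeI[of ?ev "[:0, 1:]"] by (simp add: hom_distribs)
    show "x \<noteq> 0" using x \<open>m > 0\<close> by (auto simp: primitive_root_of_unity_def power_0_left)
    show "y * z \<in> range ?ev" if y: "y \<in> range ?ev" and z: "z \<in> range ?ev" for y z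
    proof -
      obtain a b where "y = ?ev a" "z = ?ev b" using y z by blast
      then have "y * z = ?ev (a * b)" by (simp only: hom_mult)
      then show ?thesis by (rule range_eqI)
    qed
  qed simp
  moreover have "0 \<in> range ?ev" using hom_zero by (metis rangeI)
  then have "card (range ?ev - {0}) = 2 ^ degree f - 1"
    using card_range by (simp add: card_Diff_singleton)
  ultimately have "m dvd 2 ^ degree f - 1" using primitive_root_of_unity_dvd x \<open>m > 0\<close> by metis
  then have "[2 ^ degree f = 1] (mod m)" by (subst cong_altdef_nat) auto
  then have "ord m 2 dvd degree f" using ord_divides'[of 2 "degree f" m] by simp
  then have "ord m 2 \<le> degree f" using \<open>degree f > 0\<close> by (rule dvd_imp_le)
  then have "card (UNIV :: 'a set) \<le> card (range ?ev)"
    unfolding card card_range by (rule power_increasing) simp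
  then show ?thesis by (intro card_seteq) simp_all
qed

lemma ex_comm_ring_hom_primitive_root_of_unity:
  fixes x :: "'a::{field,finite}" and y :: "'b::field"
  assumes card: "CARD('a) = 2 ^ ord m 2" and "(2::'b) = 0"
    and x: "primitive_root_of_unity m x" and y: "primitive_root_of_unity m y" and "m > 0"
  obtains \<phi> i where "comm_ring_hom \<phi>" "\<phi> x = y ^ i"
proof -
  have hom_a: "comm_ring_hom (of_bit :: bit \<Rightarrow> 'a)"
    using card by (intro comm_ring_hom_of_bit two_eq_zero_if_CARD_eq_power_2)
  have hom_b: "comm_ring_hom (of_bit :: bit \<Rightarrow> 'b)"
    using \<open>(2::'b) = 0\<close> by (rule comm_ring_hom_of_bit)
  interpret a: map_poly_comm_ring_hom "of_bit :: bit \<Rightarrow> 'a"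
    using hom_a by (simp add: map_poly_comm_ring_hom_def)
  interpret b: map_poly_comm_ring_hom "of_bit :: bit \<Rightarrow> 'b"
    using hom_b by (simp add: map_poly_comm_ring_hom_def)
  let ?ea = "\<lambda>h. poly (map_poly of_bit h) x"
  let ?u = "monom 1 m - 1 :: bit poly"
  have "coeff ?u m = 1" using \<open>m > 0\<close> by simp
  then have "?u \<noteq> 0" by (metis coeff_0 zero_neq_one)
  have map_u_a: "map_poly (of_bit :: bit \<Rightarrow> 'a) ?u = monom 1 m - 1"
    by (simp only: a.hom_minus a.hom_one a.base.map_poly_hom_monom a.base.hom_one)
  have map_u_b: "map_poly (of_bit :: bit \<Rightarrow> 'b) ?u = monom 1 m - 1"
    by (simp only: b.hom_minus b.hom_one b.base.map_poly_hom_monom b.base.hom_one)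
  have "?ea ?u = x ^ m - 1" by (simp only: map_u_a poly_diff poly_monom poly_1 mult_1)
  then have "?ea ?u = 0" using x by (simp add: primitive_root_of_unity_def)
  with \<open>?u \<noteq> 0\<close> obtain f where "f \<noteq> 0" and ker: "\<And>h. ?ea h = 0 \<longleftrightarrow> f dvd h"
    using comm_ring_hom_poly_kernel_principal[OF comm_ring_hom_poly_map_poly[OF hom_a]] by blast
  have "degree f > 0"
  proof (rule ccontr)
    assume "\<not> degree f > 0"
    then have "f dvd 1" using \<open>f \<noteq> 0\<close> by (simp add: is_unit_iff_degree)
    then show False using ker[of 1] by simp
  qed
  have surj: "surj ?ea" by (rule surj_poly_of_bit_primitive_root) (fact+)
  let ?fb = "map_poly (of_bit :: bit \<Rightarrow> 'b) f"
  have "f dvd ?u" using ker \<open>?ea ?u = 0\<close> by blast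
  then have "?fb dvd map_poly of_bit ?u" by (rule b.hom_dvd)
  then have fb_dvd: "?fb dvd monom 1 m - 1" by (simp only: map_u_b)
  have "degree ?fb = degree f" by (rule degree_map_poly) simp
  with \<open>degree f > 0\<close> have "degree ?fb > 0" by simp
  then obtain i where root: "poly ?fb (y ^ i) = 0"
    by (rule primitive_root_of_unity_power_root_of_dvd[OF y \<open>m > 0\<close> fb_dvd])
  let ?eb = "\<lambda>h. poly (map_poly of_bit h) (y ^ i)"
  have "?eb h = 0" if h: "?ea h = 0" for h
  proof -
    have "f dvd h" using ker h by blast
    then obtain g where "h = f * g" by (elim dvdE)
    then show ?thesis using root by (simp only: b.hom_mult poly_mult mult_zero_left)
  qed
  then obtain \<phi> where hom: "comm_ring_hom \<phi>" and \<phi>: "\<And>h. \<phi> (?ea h) = ?eb h"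
    using comm_ring_hom_factor_surj[OF comm_ring_hom_poly_map_poly[OF hom_a]
        comm_ring_hom_poly_map_poly[OF hom_b] surj] by blast
  have "map_poly (of_bit :: bit \<Rightarrow> 'a) (monom 1 1) = monom 1 1"
    "map_poly (of_bit :: bit \<Rightarrow> 'b) (monom 1 1) = monom 1 1"
    by (simp_all only: a.base.map_poly_hom_monom a.base.hom_one b.base.map_poly_hom_monom b.base.hom_one)
  then have "\<phi> x = y ^ i"
    using \<phi>[of "monom 1 1"] by (simp only: poly_monom power_one_right mult_1)
  with hom show ?thesis by (rule that)
qed

lemma power_mod_eq_if_power_eq_1:
  fixes x :: "'a::monoid_mult"
  assumes "x ^ m = 1"
  shows "x ^ (n mod m) = x ^ n"
proof -
  have "x ^ n = (x ^ m) ^ (n div m) * x ^ (n mod m)"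
    by (simp flip: power_mult power_add)
  then show ?thesis using assms by simp
qed

lemma decoding_poly_pcompose_monom:
  fixes \<phi> :: "'a::field \<Rightarrow> 'b::field"
  assumes hom: "comm_ring_hom \<phi>" and "\<phi> x = y ^ N" "x ^ m = 1" and P: "decoding_poly x S P"
    and T: "\<And>s. s \<in> T \<Longrightarrow> s mod m \<in> S"
  shows "decoding_poly y T (map_poly \<phi> P \<circ>\<^sub>p monom 1 N)"
proof -
  interpret map_poly_comm_ring_hom \<phi> using hom by (simp add: map_poly_comm_ring_hom_def)
  have eval: "poly (map_poly \<phi> P \<circ>\<^sub>p monom 1 N) (y ^ s) = \<phi> (poly P (x ^ s))" for s
  proof -
    have "poly (monom 1 N) (y ^ s) = (y ^ N) ^ s"
      by (simp add: poly_monom mult.commute flip: power_mult)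
    also have "\<dots> = \<phi> (x ^ s)" using assms(2) by (simp add: base.hom_power)
    finally show ?thesis by (simp add: poly_pcompose)
  qed
  show ?thesis unfolding decoding_poly_def
  proof (intro conjI ballI)
    fix s assume "s \<in> T"
    then have "poly P (x ^ (s mod m)) = 0" using P T by (simp add: decoding_poly_def)
    then have "poly P (x ^ s) = 0" by (simp only: power_mod_eq_if_power_eq_1[OF \<open>x ^ m = 1\<close>])
    then show "poly (map_poly \<phi> P \<circ>\<^sub>p monom 1 N) (y ^ s) = 0" by (simp add: eval)
  next
    show "poly (map_poly \<phi> P \<circ>\<^sub>p monom 1 N) 1 = 1"
      using eval[of 0] P by (simp add: decoding_poly_def)
  qed
qed

lemma finite_nonzero_coeffs: "finite {i. coeff p i \<noteq> 0}"
  by (rule finite_subset[of _ "{..degree p}"]) (auto intro: le_degree)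

lemma num_monomials_map_poly_le:
  assumes "f 0 = 0"
  shows "num_monomials (map_poly f p) \<le> num_monomials p"
  unfolding num_monomials_def using assms
  by (intro card_mono finite_nonzero_coeffs) (auto simp: coeff_map_poly)

lemma num_monomials_pcompose_monom_le:
  fixes p :: "'a::comm_ring_1 poly"
  shows "num_monomials (p \<circ>\<^sub>p monom 1 N) \<le> num_monomials p"
proof (cases "N = 0 \<or> p = 0")
  case True
  then show ?thesis
  proof
    assume "N = 0"
    then have "p \<circ>\<^sub>p monom 1 N = [:poly p 1:]"
      by (induction p) (simp_all add: pcompose_pCons)
    moreover have "{i. coeff [:poly p 1:] i \<noteq> 0} \<subseteq> {0}"
      by (simp add: coeff_const subset_iff)
    ultimately have "num_monomials (p \<circ>\<^sub>p monom 1 N) \<le> card {0 :: nat}"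
      unfolding num_monomials_def by (intro card_mono) simp_all
    moreover have "1 \<le> num_monomials p" if "p \<noteq> 0"
      using that finite_nonzero_coeffs[of p]
      by (auto simp: num_monomials_def Suc_le_eq card_gt_0_iff intro!: exI[of _ "degree p"])
    ultimately show ?thesis by (cases "p = 0") auto
  qed simp
next
  case False
  have "{n. coeff (p \<circ>\<^sub>p monom 1 N) n \<noteq> 0} \<subseteq> (\<lambda>i. N * i) ` {i. coeff p i \<noteq> 0}"
  proof
    fix n assume "n \<in> {n. coeff (p \<circ>\<^sub>p monom 1 N) n \<noteq> 0}"
    moreover have "n = N * (n div N) + n mod N" by simp
    ultimately have "n mod N = 0" "coeff p (n div N) \<noteq> 0"
      using coeff_pcompose_monom[of "n mod N" N p "n div N"] False by (auto split: if_splits)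
    then show "n \<in> (\<lambda>i. N * i) ` {i. coeff p i \<noteq> 0}"
      by (intro image_eqI[of _ _ "n div N"]) auto
  qed
  then have "num_monomials (p \<circ>\<^sub>p monom 1 N) \<le> card ((\<lambda>i. N * i) ` {i. coeff p i \<noteq> 0})"
    unfolding num_monomials_def by (intro card_mono finite_imageI finite_nonzero_coeffs)
  also have "\<dots> \<le> num_monomials p"
    unfolding num_monomials_def by (rule card_image_le[OF finite_nonzero_coeffs])
  finally show ?thesis .
qed

lemma s_sigma_eqI:
  assumes "coprime q1 q2" "s < q1 * q2" "s mod q1 = \<sigma>1" "s mod q2 = \<sigma>2"
  shows "s_sigma q1 q2 \<sigma>1 \<sigma>2 = s"
  unfolding s_sigma_def
proof (rule the_equality)
  fix s' assume s': "s' < q1 * q2 \<and> s' mod q1 = \<sigma>1 \<and> s' mod q2 = \<sigma>2"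
  then have "[s' = s] (mod q1 * q2)"
    using assms by (intro coprime_cong_mult_nat) (auto simp: cong_def)
  then show "s' = s" using s' assms(2) by (simp add: cong_less_modulus_unique_nat)
qed (use assms in simp)

lemma s_sigma_mod:
  assumes "coprime q1 q2" "\<sigma>1 < q1" "\<sigma>2 < q2"
  shows "s_sigma q1 q2 \<sigma>1 \<sigma>2 mod q1 = \<sigma>1" "s_sigma q1 q2 \<sigma>1 \<sigma>2 mod q2 = \<sigma>2"
proof -
  obtain s where s: "[s = \<sigma>1] (mod q1)" "[s = \<sigma>2] (mod q2)"
    using binary_chinese_remainder_nat[OF assms(1)] by blast
  then have "s mod (q1 * q2) mod q1 = \<sigma>1" "s mod (q1 * q2) mod q2 = \<sigma>2"
    using assms by (simp_all add: cong_def mod_mod_cancel)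
  moreover have "s_sigma q1 q2 \<sigma>1 \<sigma>2 = s mod (q1 * q2)"
    using assms calculation by (intro s_sigma_eqI) simp_all
  ultimately show "s_sigma q1 q2 \<sigma>1 \<sigma>2 mod q1 = \<sigma>1" "s_sigma q1 q2 \<sigma>1 \<sigma>2 mod q2 = \<sigma>2"
    by simp_all
qed

lemma s_sigma_mod_mult:
  assumes "coprime Q1 Q2" "q1 dvd Q1" "q2 dvd Q2" "0 < Q1" "0 < Q2" "\<sigma>1 < q1" "\<sigma>2 < q2"
  shows "s_sigma Q1 Q2 \<sigma>1 \<sigma>2 mod (q1 * q2) = s_sigma q1 q2 \<sigma>1 \<sigma>2"
proof -
  let ?s = "s_sigma Q1 Q2 \<sigma>1 \<sigma>2"
  have "\<sigma>1 < Q1" "\<sigma>2 < Q2"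
    using dvd_imp_le[OF assms(2,4)] dvd_imp_le[OF assms(3,5)] assms(6,7) by linarith+
  then have "?s mod Q1 = \<sigma>1" "?s mod Q2 = \<sigma>2" using s_sigma_mod assms(1) by blast+
  moreover have "?s mod (q1 * q2) mod q1 = ?s mod Q1 mod q1" "?s mod (q1 * q2) mod q2 = ?s mod Q2 mod q2"
    using assms(2,3) by (simp_all add: mod_mod_cancel)
  ultimately have "?s mod (q1 * q2) mod q1 = \<sigma>1" "?s mod (q1 * q2) mod q2 = \<sigma>2"
    using assms(6,7) by simp_all
  moreover have "coprime q1 q2" using assms(2,3,1) by (rule coprime_divisors)
  ultimately show ?thesis using assms by (intro s_sigma_eqI[symmetric]) simp_all
qed

lemma prime_power_mult_dvd_imp_le:
  fixes p1 p2 :: nat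
  assumes "prime p1" "prime p2" "p1 \<noteq> p2" "p1 ^ a1 * p2 ^ a2 dvd p1 ^ b1 * p2 ^ b2"
  shows "a1 \<le> b1"
proof -
  have "coprime (p1 ^ a1) (p2 ^ b2)" using assms(1-3) by (simp add: primes_coprime)
  moreover have "p1 ^ a1 dvd p1 ^ b1 * p2 ^ b2" using assms(4) by (rule dvd_mult_left)
  ultimately have "p1 ^ a1 dvd p1 ^ b1" by (simp add: coprime_dvd_mult_left_iff)
  then show ?thesis by (rule power_dvd_imp_le) (rule prime_gt_1_nat[OF assms(1)])
qed

lemma mod_mem_canonical_set:
  assumes "prime p1" "prime p2" "p1 \<noteq> p2" "0 < a1" "0 < a2"
    and "p1 ^ a1 * p2 ^ a2 dvd p1 ^ b1 * p2 ^ b2" and "s \<in> canonical_set p1 b1 p2 b2"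
  shows "s mod (p1 ^ a1 * p2 ^ a2) \<in> canonical_set p1 a1 p2 a2"
proof -
  have "a1 \<le> b1" using assms(1-3,6) by (rule prime_power_mult_dvd_imp_le)
  have "p2 ^ a2 * p1 ^ a1 dvd p2 ^ b2 * p1 ^ b1" using assms(6) by (simp add: mult.commute)
  with assms(1-3) have "a2 \<le> b2" by (intro prime_power_mult_dvd_imp_le[of p2 p1]) auto
  have "coprime (p1 ^ b1) (p2 ^ b2)" using assms(1-3) by (simp add: primes_coprime)
  moreover have "p1 ^ a1 dvd p1 ^ b1" "p2 ^ a2 dvd p2 ^ b2"
    using \<open>a1 \<le> b1\<close> \<open>a2 \<le> b2\<close> by (simp_all add: le_imp_power_dvd)
  moreover have "1 < p1 ^ a1" "1 < p2 ^ a2"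
    using one_less_power[OF prime_gt_1_nat[OF assms(1)] assms(4)]
      one_less_power[OF prime_gt_1_nat[OF assms(2)] assms(5)] by simp_all
  ultimately show ?thesis using assms(1,2,7) s_sigma_mod_mult[of "p1 ^ b1" "p2 ^ b2" "p1 ^ a1" "p2 ^ a2"]
    unfolding canonical_set_def by (auto simp: prime_gt_0_nat)
qed

theorem theorem3:
  fixes p1 p2 a1 a2 b1 b2 :: nat
    and \<gamma>1 :: "'a::{field,finite}" and \<gamma>2 :: "'b::{field,finite}"
  assumes "prime p1" "prime p2" "p1 > 2" "p2 > 2" "p1 \<noteq> p2"
    and "a1 \<ge> 1" "a2 \<ge> 1" "b1 \<ge> 1" "b2 \<ge> 1"
    and "CARD('a) = 2 ^ ord (p1^a1 * p2^a2) 2"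
    and "CARD('b) = 2 ^ ord (p1^b1 * p2^b2) 2"
    and "primitive_root_of_unity (p1^a1 * p2^a2) \<gamma>1"
    and "primitive_root_of_unity (p1^b1 * p2^b2) \<gamma>2"
    and "good_wrt \<gamma>1 p1 a1 p2 a2"
    and "(p1^a1 * p2^a2) dvd (p1^b1 * p2^b2)"
  shows "good_wrt \<gamma>2 p1 b1 p2 b2"
proof -
  let ?m1 = "p1 ^ a1 * p2 ^ a2" and ?m2 = "p1 ^ b1 * p2 ^ b2"
  have "0 < ?m2" using assms(1,2) by (simp add: prime_gt_0_nat)
  then have "0 < ?m1" using assms(15) by (rule dvd_pos_nat)
  have "primitive_root_of_unity ?m1 (\<gamma>2 ^ (?m2 div ?m1))"
    using assms(13,15) \<open>0 < ?m2\<close> by (rule primitive_root_of_unity_power_div)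
  then obtain \<phi> i where \<phi>: "comm_ring_hom \<phi>" and "\<phi> \<gamma>1 = (\<gamma>2 ^ (?m2 div ?m1)) ^ i"
    by (rule ex_comm_ring_hom_primitive_root_of_unity[OF assms(10)
        two_eq_zero_if_CARD_eq_power_2[OF assms(11)] assms(12) _ \<open>0 < ?m1\<close>])
  then have \<phi>\<gamma>1: "\<phi> \<gamma>1 = \<gamma>2 ^ (?m2 div ?m1 * i)" by (simp add: power_mult)
  obtain P where P: "decoding_poly \<gamma>1 (canonical_set p1 a1 p2 a2) P" "num_monomials P < 4"
    using assms(14) by (auto simp: good_wrt_def)
  let ?Q = "map_poly \<phi> P \<circ>\<^sub>p monom 1 (?m2 div ?m1 * i)"
  have "\<gamma>1 ^ ?m1 = 1" using assms(12) by (simp add: primitive_root_of_unity_def)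
  moreover have "s mod ?m1 \<in> canonical_set p1 a1 p2 a2" if "s \<in> canonical_set p1 b1 p2 b2" for s
    using assms(6,7) by (intro mod_mem_canonical_set[OF assms(1,2,5) _ _ assms(15) that]) simp_all
  ultimately have decoding: "decoding_poly \<gamma>2 (canonical_set p1 b1 p2 b2) ?Q"
    by (rule decoding_poly_pcompose_monom[OF \<phi> \<phi>\<gamma>1 _ P(1)])
  interpret \<phi>: comm_ring_hom \<phi> by (fact \<phi>)
  have "num_monomials ?Q \<le> num_monomials P"
    using num_monomials_pcompose_monom_le num_monomials_map_poly_le[of \<phi> P] by (rule order_trans) simp
  with P(2) decoding show ?thesis unfolding good_wrt_def by fastforce
qed

end
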